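(* Let $d\ge 2$, let $c_d$ be the unique positive solution of $g_d(x)=d+1$ where $g_d(x)=(d+1)(x+1)e^{-x}+x(1-e^{-x})^{d+1}$, let $c>c_d$ and $p=\frac{c}{n}$. For $Y\in Y_d(n,p)$ define $$v(Y)=f_d(Y)+a(Y)+\sum_{j=0}^{d}\alpha_j(Y)(d-j)-\binom{n}{d},$$ where $f_d(Y)$ is the number of $d$-simplices of $Y$, $a(Y)$ is the number of $(d-1)$-simplices $\tau$ of $\Delta_{n-1}$ contained in no $d$-simplex of $Y$, and $\alpha_j(Y)$ is the number of $d$-simplices of $Y$ that contain exactly $d+1-j$ of their $(d-1)$-faces which are contained in exactly one $d$-simplex of $Y$. Then $$\lim_{n\to\infty}\Pr\big[Y\in Y_d(n,p): v(Y)\le 0\big]=0.$$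
   Context: $\Delta_{n-1}$ denotes the $(n-1)$-dimensional simplex on vertex set $[n]$, and $\Delta_{n-1}^{(i)}$ its $i$-skeleton. $Y_d(n,p)$ is the probability space of complexes $\Delta_{n-1}^{(d-1)}\subset Y\subset\Delta_{n-1}^{(d)}$ in which each $d$-simplex is included independently with probability $p$. *)

theory Defs
  imports Complex_Main
begin

text \<open>A complex Y in Y_d(n,p)
is identified with its set of d-simplices (the full (d-1)-skeleton is always present).\<close>

definition dsimplices :: "nat \<Rightarrow> nat \<Rightarrow> nat set set" where
  "dsimplices n d = {s. s \<subseteq> {..<n} \<and> card s = d + 1}"

definition ridges :: "nat \<Rightarrow> nat \<Rightarrow> nat set set" where
  "ridges n d = {t. t \<subseteq> {..<n} \<and> card t = d}"

definition cdeg :: "nat set set \<Rightarrow> nat set \<Rightarrow> nat" where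
  "cdeg Y t = card {s \<in> Y. t \<subseteq> s}"

definition a_count :: "nat \<Rightarrow> nat \<Rightarrow> nat set set \<Rightarrow> nat" where
  "a_count n d Y = card {t \<in> ridges n d. cdeg Y t = 0}"

definition alpha_count :: "nat \<Rightarrow> nat \<Rightarrow> nat set set \<Rightarrow> nat" where
  "alpha_count d j Y =
     card {s \<in> Y. card {t. t \<subseteq> s \<and> card t = d \<and> cdeg Y t = 1} = d + 1 - j}"

definition v_fun :: "nat \<Rightarrow> nat \<Rightarrow> nat set set \<Rightarrow> int" where
  "v_fun n d Y = int (card Y) + int (a_count n d Y)
     + (\<Sum>j = 0..d. int (alpha_count d j Y) * int (d - j)) - int (n choose d)"

definition g_fun :: "nat \<Rightarrow> real \<Rightarrow> real" where
  "g_fun d x = (real d + 1) * (x + 1) * exp (- x) + x * (1 - exp (- x)) ^ (d + 1)"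

definition c_crit :: "nat \<Rightarrow> real" where
  "c_crit d = (THE x. x > 0 \<and> g_fun d x = real d + 1)"

text \<open>Probability in Y_d(n,p) of the event P: each d-simplex included independently with prob. p.\<close>
definition prob_Yd :: "nat \<Rightarrow> nat \<Rightarrow> real \<Rightarrow> (nat set set \<Rightarrow> bool) \<Rightarrow> real" where
  "prob_Yd n d p P =
     (\<Sum>Y \<in> {Y. Y \<subseteq> dsimplices n d \<and> P Y}.
        p ^ card Y * (1 - p) ^ (card (dsimplices n d) - card Y))"

end

theory Submission
  imports Defs "HOL-Probability.Probability" "HOL-Real_Asymp.Real_Asymp"
begin

text \<open>
  Write \<open>v(Y) = F(Y) - H(Y)\<close>, where \<open>F\<close> counts the \<open>d\<close>-simplices of \<open>Y\<close> without a free
  facet and \<open>H\<close> counts the \<open>(d-1)\<close>-simplices lying in at least two \<open>d\<close>-simplices of \<open>Y\<close>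
  (double counting the free facets turns the \<open>\<alpha>\<^sub>j\<close>-sum into the number of free facets minus
  the number of \<open>d\<close>-simplices having one). For \<open>p = c/n\<close> both expectations are of order
  \<open>binomial n d\<close>, and \<open>(E F - E H) / binomial n d\<close> tends to \<open>(g\<^sub>d(c) - (d+1))/(d+1)\<close>, which is
  positive for \<open>c > c\<^sub>d\<close> because \<open>g\<^sub>d(x) - (d+1)\<close> has the sign of \<open>crit_ratio d x - (d+1)\<close>
  and \<open>crit_ratio d\<close> is strictly increasing. Both counts are sums of indicators of events each depending on few
  \<open>d\<close>-simplices, and every event is independent of all but \<open>O(n\<^sup>2)\<close> others; hence both
  variances are \<open>O(n \<cdot> binomial n d)\<close>, and Chebyshev's inequality bounds the probability of
  \<open>v(Y) \<le> 0\<close> by \<open>O(1/n)\<close>.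
\<close>

section \<open>The critical constant\<close>

lemma exp_ge_cubic_Taylor:
  assumes "0 \<le> (x::real)"
  shows "1 + x + x\<^sup>2/2 + x^3/6 \<le> exp x"
proof -
  obtain t where "exp x = (\<Sum>m<4. x ^ m / fact m) + exp t / fact 4 * x ^ 4"
    using Maclaurin_exp_le[of x 4] by blast
  moreover have "(\<Sum>m<4. x ^ m / fact m) = 1 + x + x\<^sup>2/2 + x^3/6"
    by (simp add: eval_nat_numeral fact_numeral)
  ultimately show ?thesis
    using assms by simp
qed

lemma exp_neg_le_quadratic:
  assumes "0 \<le> (x::real)"
  shows "exp (-x) \<le> 1 - x + x\<^sup>2/2"
proof -
  obtain t where "exp (-x) = (\<Sum>m<3. (-x) ^ m / fact m) + exp t / fact 3 * (-x) ^ 3"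
    using Maclaurin_exp_le[of "-x" 3] by blast
  moreover have "(\<Sum>m<3. (-x) ^ m / fact m) = 1 - x + x\<^sup>2/2"
    by (simp add: eval_nat_numeral fact_numeral)
  moreover have "exp t / fact 3 * (-x) ^ 3 \<le> 0"
    using assms by simp
  ultimately show ?thesis
    by linarith
qed

lemma exp_minus_one_poly_pos:
  assumes x: "(x::real) > 0"
  shows "(exp x - 1)\<^sup>2 + 2*x*(exp x - 1) - 3*x\<^sup>2 - x\<^sup>2*(exp x - 1) > 0"
proof -
  define E where "E = exp x - 1"
  define E0 where "E0 = x + x\<^sup>2/2 + x^3/6"
  have E0_le: "E0 \<le> E"
    using exp_ge_cubic_Taylor[of x] x unfolding E_def E0_def by simp
  have "E0*E0 + E0*(2*x - x\<^sup>2) - 3*x\<^sup>2 = x^3 + (5/12)*x^4 + x^6/36"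
    unfolding E0_def by (simp add: field_simps eval_nat_numeral)
  moreover have "x^3 + (5/12)*x^4 + x^6/36 > 0"
    using x by (simp add: add_pos_nonneg)
  \<comment> \<open>the polynomial \<open>y\<^sup>2 + y (2x - x\<^sup>2) - 3x\<^sup>2\<close> increases in \<open>y\<close> on \<open>[E0, E]\<close>\<close>
  moreover have "E*E + E*(2*x-x\<^sup>2) - (E0*E0 + E0*(2*x-x\<^sup>2)) = (E - E0)*(E + E0 + 2*x - x\<^sup>2)"
    by (simp add: algebra_simps)
  moreover have "(E - E0)*(E + E0 + 2*x - x\<^sup>2) \<ge> 0"
  proof -
    have "E0 \<ge> x\<^sup>2/2"
      unfolding E0_def using x by (simp add: add_nonneg_nonneg)
    then show ?thesis
      using E0_le x by (intro mult_nonneg_nonneg) simp_all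
  qed
  ultimately have "E*E + E*(2*x-x\<^sup>2) - 3*x\<^sup>2 > 0"
    by linarith
  then show ?thesis
    unfolding E_def by (simp add: power2_eq_square algebra_simps)
qed

text \<open>\<open>poisson_tail2 x\<close> is the probability that a Poisson variable of mean \<open>x\<close> is at least 2.\<close>

definition poisson_tail2 :: "real \<Rightarrow> real" where
  "poisson_tail2 x = 1 - (1 + x) * exp (-x)"

definition crit_ratio :: "nat \<Rightarrow> real \<Rightarrow> real" where
  "crit_ratio d x = x * (1 - exp (-x))^(d+1) / poisson_tail2 x"

lemma poisson_tail2_pos:
  assumes x: "x > 0"
  shows "poisson_tail2 x > 0"
proof -
  have "0 < x\<^sup>2/2" "0 \<le> x^3/6"
    using x by simp_all
  then have "1 + x < exp x"
    using exp_ge_cubic_Taylor[of x] x by linarith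
  then have "(1 + x) * exp (-x) < exp x * exp (-x)"
    by simp
  then show ?thesis
    unfolding poisson_tail2_def by (simp add: exp_minus_inverse)
qed

lemma g_fun_minus_eq:
  assumes "x > 0"
  shows "g_fun d x - (real d + 1) = poisson_tail2 x * (crit_ratio d x - (real d + 1))"
  using poisson_tail2_pos[OF assms]
  unfolding g_fun_def crit_ratio_def poisson_tail2_def by (simp add: field_simps)

lemma crit_ratio_has_pos_derivative:
  assumes d: "d \<ge> 2" and x: "x > 0"
  shows "\<exists>D. (crit_ratio d has_real_derivative D) (at x) \<and> D > 0"
proof -
  define q where "q = exp (-x)"
  define u where "u = poisson_tail2 x"
  have q: "q > 0" "q < 1"
    using x unfolding q_def by auto
  have u: "u > 0" "u = 1 - (1+x)*q"
    using poisson_tail2_pos[OF x] unfolding u_def q_def poisson_tail2_def by auto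
  define D where "D = (1-q)^d * (((1-q) + (real d+1)*x*q)*u - x\<^sup>2*q*(1-q)) / u\<^sup>2"
  have "(crit_ratio d has_real_derivative
      ((1 * (1 - exp (-x))^(d+1) + x * (real (d+1) * (1 - exp (-x))^d * exp (-x))) * poisson_tail2 x
        - x * (1 - exp (-x))^(d+1) * (x * exp (-x))) / (poisson_tail2 x)\<^sup>2) (at x)"
    unfolding crit_ratio_def[abs_def] poisson_tail2_def
    apply (rule derivative_eq_intros refl | simp)+
    using poisson_tail2_pos[OF x] unfolding poisson_tail2_def apply simp
    apply (simp add: field_simps power2_eq_square)
    done
  moreover have "((1 * (1 - exp (-x))^(d+1) + x * (real (d+1) * (1 - exp (-x))^d * exp (-x))) * poisson_tail2 x
        - x * (1 - exp (-x))^(d+1) * (x * exp (-x))) / (poisson_tail2 x)\<^sup>2 = D"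
    unfolding D_def q_def[symmetric] u_def[symmetric] by (simp add: field_simps power2_eq_square)
  moreover have pos3: "(1-q)*u + 3*x*q*u - x\<^sup>2*q*(1-q) > 0"
  proof -
    have "(1-q)*u + 3*x*q*u - x\<^sup>2*q*(1-q)
        = ((exp x - 1)\<^sup>2 + 2*x*(exp x - 1) - 3*x\<^sup>2 - x\<^sup>2*(exp x - 1)) / (exp x)\<^sup>2"
      unfolding u(2) q_def by (simp add: field_simps power2_eq_square exp_minus)
    then show ?thesis
      using exp_minus_one_poly_pos[OF x] by simp
  qed
  have "(real d+1)*x*q*u \<ge> 3*x*q*u"
    using d x q u(1) by (intro mult_right_mono mult_mono) auto
  with pos3 have "((1-q) + (real d+1)*x*q)*u - x\<^sup>2*q*(1-q) > 0"
    by (simp add: algebra_simps)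
  then have "D > 0"
    unfolding D_def using q u by (intro divide_pos_pos mult_pos_pos) auto
  ultimately show ?thesis
    by auto
qed

lemma crit_ratio_strict_mono:
  assumes "d \<ge> 2" and "0 < a" and "a < b"
  shows "crit_ratio d a < crit_ratio d b"
  by (rule DERIV_pos_imp_increasing[OF \<open>a < b\<close>]) (use assms crit_ratio_has_pos_derivative in auto)

lemma g_fun_half_less:
  assumes d: "d \<ge> 2"
  shows "g_fun d (1/2) < real d + 1"
proof -
  define q where "q = exp (-(1/2::real))"
  have q1: "q \<ge> 1/2"
    using exp_ge_add_one_self[of "-(1/2::real)"] unfolding q_def by simp
  have q2: "q \<le> 5/8"
    using exp_neg_le_quadratic[of "1/2"] unfolding q_def by (simp add: power2_eq_square)
  have "(1 - q)^(d+1) \<le> (1/2)^(d+1)"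
    using q1 q2 by (intro power_mono) auto
  also have "(1/2::real)^(d+1) \<le> (1/2)^3"
    using d by (intro power_decreasing) auto
  finally have "(1 - q)^(d+1) \<le> 1/8"
    by (simp add: eval_nat_numeral)
  moreover have "(real d + 1) * poisson_tail2 (1/2) \<ge> 3 * (1/16)"
    using q2 d unfolding poisson_tail2_def q_def[symmetric] by (intro mult_mono) auto
  moreover have "g_fun d (1/2) - (real d + 1) = (1/2) * (1 - q)^(d+1) - (real d + 1) * poisson_tail2 (1/2)"
    unfolding g_fun_def poisson_tail2_def q_def by (simp add: field_simps)
  ultimately show ?thesis
    by linarith
qed

lemma g_fun_large_ge:
  assumes d: "d \<ge> 2"
  shows "g_fun d (4*(real d+1)) \<ge> real d + 1"
proof -
  define x where "x = 4*(real d+1)"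
  define q where "q = exp (-x)"
  have x0: "x > 0"
    unfolding x_def by simp
  have q: "0 < q" "q \<le> 1/(1+x)"
    using exp_ge_add_one_self[of x] x0 unfolding q_def by (auto simp: exp_minus field_simps)
  have "1/(1+x) \<le> 1"
    using x0 by simp
  then have "1 + real (d+1) * (-q) \<le> (1 + (-q))^(d+1)"
    using q by (intro Bernoulli_inequality) linarith
  moreover have "real (d+1) * q \<le> 1/4"
  proof -
    have "real (d+1) * q \<le> real (d+1) * (1/(1+x))"
      using q by (intro mult_left_mono) auto
    also have "\<dots> \<le> 1/4"
      unfolding x_def by (simp add: field_simps)
    finally show ?thesis .
  qed
  ultimately have "(1 - q)^(d+1) \<ge> 3/4"
    by simp
  then have "x * (1 - q)^(d+1) \<ge> x * (3/4)"
    using x0 by (intro mult_left_mono) auto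
  moreover have "g_fun d x \<ge> x * (1 - q)^(d+1)"
    unfolding g_fun_def q_def using x0 by (simp add: add_increasing)
  ultimately show ?thesis
    unfolding x_def by simp
qed

lemma g_fun_eq_iff_crit_ratio_eq:
  assumes "x > 0"
  shows "g_fun d x = real d + 1 \<longleftrightarrow> crit_ratio d x = real d + 1"
  using g_fun_minus_eq[OF assms, of d] poisson_tail2_pos[OF assms] by auto

lemma c_crit_root:
  assumes d: "d \<ge> 2"
  shows "c_crit d > 0" and "crit_ratio d (c_crit d) = real d + 1"
proof -
  have "continuous_on {1/2 .. 4*(real d+1)} (g_fun d)"
    unfolding g_fun_def by (intro continuous_intros)
  then obtain x where x: "1/2 \<le> x" "g_fun d x = real d + 1"
    using IVT'[of "g_fun d" "1/2" "real d + 1" "4*(real d+1)"] g_fun_half_less[OF d] g_fun_large_ge[OF d]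
    by auto
  have unique: "y = x" if "y > 0" "g_fun d y = real d + 1" for y
    using crit_ratio_strict_mono[OF d, of x y] crit_ratio_strict_mono[OF d, of y x] x that
    by (cases x y rule: linorder_cases) (auto simp: g_fun_eq_iff_crit_ratio_eq)
  have "c_crit d = x"
    unfolding c_crit_def by (rule the_equality) (use x unique in auto)
  then show "c_crit d > 0" and "crit_ratio d (c_crit d) = real d + 1"
    using x by (auto simp: g_fun_eq_iff_crit_ratio_eq)
qed

lemma g_fun_gt_above_c_crit:
  assumes d: "d \<ge> 2" and c: "c > c_crit d"
  shows "g_fun d c > real d + 1"
proof -
  have "crit_ratio d c > real d + 1"
    using crit_ratio_strict_mono[OF d c_crit_root(1)[OF d] c] c_crit_root(2)[OF d] by simp
  moreover have "c > 0"
    using c_crit_root(1)[OF d] c by linarith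
  ultimately have "poisson_tail2 c * (crit_ratio d c - (real d + 1)) > 0"
    using poisson_tail2_pos[of c] by simp
  then show ?thesis
    using g_fun_minus_eq[of c d] \<open>c > 0\<close> by simp
qed

section \<open>The functional \<open>v\<close> as a difference of two counts\<close>

lemma finite_dsimplices: "finite (dsimplices n d)"
  unfolding dsimplices_def by (rule finite_subset[of _ "Pow {..<n}"]) auto

lemma finite_ridges: "finite (ridges n d)"
  unfolding ridges_def by (rule finite_subset[of _ "Pow {..<n}"]) auto

lemma card_dsimplices: "card (dsimplices n d) = n choose (d + 1)"
  unfolding dsimplices_def using n_subsets[of "{..<n}" "d + 1"] by simp

lemma card_ridges: "card (ridges n d) = n choose d"
  unfolding ridges_def using n_subsets[of "{..<n}" d] by simp

lemma dsimplicesD: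
  assumes "s \<in> dsimplices n d"
  shows "s \<subseteq> {..<n}" "card s = d + 1" "finite s"
  using assms finite_subset[of s "{..<n}"] unfolding dsimplices_def by auto

definition facets :: "nat \<Rightarrow> nat set \<Rightarrow> nat set set" where
  "facets d s = {t. t \<subseteq> s \<and> card t = d}"

lemma finite_facets: "s \<in> dsimplices n d \<Longrightarrow> finite (facets d s)"
  unfolding facets_def using dsimplicesD[of s n d] by (auto intro: finite_subset[of _ "Pow s"])

lemma card_facets: "s \<in> dsimplices n d \<Longrightarrow> card (facets d s) = d + 1"
  unfolding facets_def using dsimplicesD[of s n d] n_subsets[of s d] by simp

lemma facets_subset_ridges: "s \<in> dsimplices n d \<Longrightarrow> facets d s \<subseteq> ridges n d"
  unfolding facets_def ridges_def dsimplices_def by auto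

definition free_facets :: "nat \<Rightarrow> nat set set \<Rightarrow> nat set \<Rightarrow> nat" where
  "free_facets d Y s = card {t \<in> facets d s. cdeg Y t = 1}"

lemma free_facets_le:
  assumes "s \<in> dsimplices n d"
  shows "free_facets d Y s \<le> d + 1"
  unfolding free_facets_def
  using card_mono[OF finite_facets[OF assms], of "{t \<in> facets d s. cdeg Y t = 1}"] card_facets[OF assms]
  by auto

lemma sum_free_facets_eq:
  assumes Y: "Y \<subseteq> dsimplices n d"
  shows "(\<Sum>s\<in>Y. free_facets d Y s) = card {t \<in> ridges n d. cdeg Y t = 1}"
proof -
  have fY: "finite Y"
    using Y finite_dsimplices finite_subset by blast
  \<comment> \<open>double counting of the pairs \<open>(s, t)\<close> with \<open>t \<subseteq> s\<close> and \<open>cdeg Y t = 1\<close>\<close>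
  have "(\<Sum>s\<in>Y. free_facets d Y s)
      = (\<Sum>s\<in>Y. \<Sum>t\<in>ridges n d. if t \<subseteq> s \<and> cdeg Y t = 1 then 1 else 0)"
  proof (intro sum.cong refl)
    fix s assume "s \<in> Y"
    then have "{t \<in> facets d s. cdeg Y t = 1} = {t \<in> ridges n d. t \<subseteq> s \<and> cdeg Y t = 1}"
      using Y unfolding facets_def ridges_def dsimplices_def by auto
    then show "free_facets d Y s = (\<Sum>t\<in>ridges n d. if t \<subseteq> s \<and> cdeg Y t = 1 then 1 else 0)"
      unfolding free_facets_def by (simp add: sum.If_cases Int_def finite_ridges)
  qed
  also have "\<dots> = (\<Sum>t\<in>ridges n d. \<Sum>s\<in>Y. if t \<subseteq> s \<and> cdeg Y t = 1 then 1 else 0)"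
    by (rule sum.swap)
  also have "\<dots> = (\<Sum>t\<in>ridges n d. if cdeg Y t = 1 then 1 else 0)"
    by (intro sum.cong refl) (auto simp: sum.If_cases Int_def fY cdeg_def)
  also have "\<dots> = card {t \<in> ridges n d. cdeg Y t = 1}"
    by (simp add: sum.If_cases Int_def finite_ridges)
  finally show ?thesis .
qed

lemma sum_alpha_count_eq:
  assumes Y: "Y \<subseteq> dsimplices n d"
  shows "(\<Sum>j = 0..d. int (alpha_count d j Y) * int (d - j))
         = int (card {t \<in> ridges n d. cdeg Y t = 1}) - int (card {s \<in> Y. free_facets d Y s \<ge> 1})"
proof -
  have fY: "finite Y"
    using Y finite_dsimplices finite_subset by blast
  have "(\<Sum>j = 0..d. int (alpha_count d j Y) * int (d - j))
      = (\<Sum>j = 0..d. \<Sum>s\<in>Y. if free_facets d Y s = d + 1 - j then int (d - j) else 0)"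
    unfolding alpha_count_def free_facets_def facets_def
    by (intro sum.cong refl) (simp add: sum.If_cases Int_def fY conj_assoc)
  also have "\<dots> = (\<Sum>s\<in>Y. \<Sum>j = 0..d. if free_facets d Y s = d + 1 - j then int (d - j) else 0)"
    by (rule sum.swap)
  also have "\<dots> = (\<Sum>s\<in>Y. if free_facets d Y s \<ge> 1 then int (free_facets d Y s) - 1 else 0)"
  proof (intro sum.cong refl)
    fix s assume "s \<in> Y"
    then have k: "free_facets d Y s \<le> d + 1"
      using free_facets_le Y by blast
    show "(\<Sum>j = 0..d. if free_facets d Y s = d + 1 - j then int (d - j) else 0)
        = (if free_facets d Y s \<ge> 1 then int (free_facets d Y s) - 1 else 0)"
    proof (cases "free_facets d Y s \<ge> 1")
      case True
      \<comment> \<open>only \<open>j = d + 1 - free_facets d Y s\<close> contributes\<close>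
      have "(\<Sum>j = 0..d. if free_facets d Y s = d + 1 - j then int (d - j) else 0)
          = (\<Sum>j = 0..d. if j = d + 1 - free_facets d Y s then int (d - j) else 0)"
        by (intro sum.cong refl) (use True k in auto)
      then show ?thesis
        using True k by auto
    qed (simp add: sum.neutral)
  qed
  also have "\<dots> = (\<Sum>s\<in>Y. int (free_facets d Y s)) - (\<Sum>s\<in>Y. if free_facets d Y s \<ge> 1 then 1 else 0)"
    by (auto simp flip: sum_subtractf intro!: sum.cong)
  also have "\<dots> = int (card {t \<in> ridges n d. cdeg Y t = 1}) - int (card {s \<in> Y. free_facets d Y s \<ge> 1})"
    using sum_free_facets_eq[OF Y] fY by (simp add: sum.If_cases Int_def flip: of_nat_sum)
  finally show ?thesis .
qed

lemma card_ridges_split_cdeg: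
  "card (ridges n d) = card {t \<in> ridges n d. cdeg Y t = 0} + card {t \<in> ridges n d. cdeg Y t = 1}
      + card {t \<in> ridges n d. cdeg Y t \<ge> 2}"
proof -
  let ?R0 = "{t \<in> ridges n d. cdeg Y t = 0}"
  let ?R1 = "{t \<in> ridges n d. cdeg Y t = 1}"
  let ?R2 = "{t \<in> ridges n d. cdeg Y t \<ge> 2}"
  have "card (ridges n d) = card ((?R0 \<union> ?R1) \<union> ?R2)"
    by (rule arg_cong[where f = card]) auto
  also have "\<dots> = card (?R0 \<union> ?R1) + card ?R2"
    by (rule card_Un_disjoint) (auto simp: finite_ridges)
  also have "card (?R0 \<union> ?R1) = card ?R0 + card ?R1"
    by (rule card_Un_disjoint) (auto simp: finite_ridges)
  finally show ?thesis .
qed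

lemma v_fun_eq:
  assumes Y: "Y \<subseteq> dsimplices n d"
  shows "v_fun n d Y = int (card {s \<in> Y. free_facets d Y s = 0}) - int (card {t \<in> ridges n d. cdeg Y t \<ge> 2})"
proof -
  have fY: "finite Y"
    using Y finite_dsimplices finite_subset by blast
  have "card Y = card ({s \<in> Y. free_facets d Y s = 0} \<union> {s \<in> Y. free_facets d Y s \<ge> 1})"
    by (rule arg_cong[where f = card]) auto
  also have "\<dots> = card {s \<in> Y. free_facets d Y s = 0} + card {s \<in> Y. free_facets d Y s \<ge> 1}"
    by (rule card_Un_disjoint) (auto simp: fY)
  finally show ?thesis
    unfolding v_fun_def a_count_def sum_alpha_count_eq[OF Y] card_ridges[symmetric]
    using card_ridges_split_cdeg[of n d Y] by simp
qed

section \<open>Events of a product measure that depend on few coordinates\<close>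

definition depends_on :: "('a \<Rightarrow> 'b) set \<Rightarrow> 'a set \<Rightarrow> bool" where
  "depends_on E A \<longleftrightarrow> (\<forall>f g. (\<forall>x\<in>A. f x = g x) \<longrightarrow> (f \<in> E \<longleftrightarrow> g \<in> E))"

lemma depends_on_mono: "depends_on E A \<Longrightarrow> A \<subseteq> B \<Longrightarrow> depends_on E B"
  unfolding depends_on_def by blast

lemma depends_on_Int:
  assumes "depends_on E A" and "depends_on F B"
  shows "depends_on (E \<inter> F) (A \<union> B)"
  unfolding depends_on_def
proof (intro allI impI)
  fix f g :: "'a \<Rightarrow> 'b" assume "\<forall>x\<in>A \<union> B. f x = g x"
  then have "f \<in> E \<longleftrightarrow> g \<in> E" and "f \<in> F \<longleftrightarrow> g \<in> F"
    using assms unfolding depends_on_def by auto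
  then show "f \<in> E \<inter> F \<longleftrightarrow> g \<in> E \<inter> F"
    by blast
qed

lemma depends_on_INT:
  assumes "\<And>i. i \<in> I \<Longrightarrow> depends_on (E i) (G i)"
  shows "depends_on {f. \<forall>i\<in>I. f \<in> E i} (\<Union>i\<in>I. G i)"
  unfolding depends_on_def
proof (intro allI impI)
  fix f g :: "'b \<Rightarrow> 'c" assume "\<forall>x\<in>(\<Union>i\<in>I. G i). f x = g x"
  then have "f \<in> E i \<longleftrightarrow> g \<in> E i" if "i \<in> I" for i
    using assms[OF that] unfolding depends_on_def by (meson UN_I that)
  then show "f \<in> {f. \<forall>i\<in>I. f \<in> E i} \<longleftrightarrow> g \<in> {f. \<forall>i\<in>I. f \<in> E i}"
    by blast
qed

lemma depends_on_card: "depends_on {f. R (card {x \<in> S. f x})} S"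
  unfolding depends_on_def by (simp cong: conj_cong)

lemma depends_on_coord: "depends_on {f. f s} {s}"
  unfolding depends_on_def by auto

lemma prob_Pi_pmf_restrict:
  assumes D: "finite D" and A: "A \<subseteq> D" and dep: "depends_on E A"
  shows "measure_pmf.prob (Pi_pmf D dflt p) E = measure_pmf.prob (Pi_pmf A dflt p) E"
proof -
  have "(\<lambda>f x. if x \<in> A then f x else dflt) -` E = E"
    using dep unfolding depends_on_def by (auto dest: spec2[of _ "\<lambda>x. if x \<in> A then _ x else dflt"])
  then show ?thesis
    by (simp add: Pi_pmf_subset[OF D A])
qed

lemma prob_Pi_pmf_Int_indep:
  assumes D: "finite D" and A: "A \<subseteq> D" and B: "B \<subseteq> D" and AB: "A \<inter> B = {}"
    and dA: "depends_on E A" and dB: "depends_on F B"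
  shows "measure_pmf.prob (Pi_pmf D dflt p) (E \<inter> F) =
         measure_pmf.prob (Pi_pmf D dflt p) E * measure_pmf.prob (Pi_pmf D dflt p) F"
proof -
  have fin: "finite A" "finite B"
    using A B D finite_subset by auto
  define mrg where "mrg = (\<lambda>(f::'a\<Rightarrow>'b, g::'a\<Rightarrow>'b) x. if x \<in> A then f x else g x)"
  define PA where "PA = Pi_pmf A dflt p"
  define PB where "PB = Pi_pmf B dflt p"
  have "mrg (f, g) \<in> E \<longleftrightarrow> f \<in> E" for f g
    using dA unfolding depends_on_def mrg_def by auto
  moreover have "mrg (f, g) \<in> F \<longleftrightarrow> g \<in> F" for f g
  proof -
    have "\<forall>x\<in>B. mrg (f, g) x = g x"
      using AB unfolding mrg_def by auto
    then show ?thesis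
      using dB unfolding depends_on_def by blast
  qed
  ultimately have preimage: "mrg -` E \<inter> mrg -` F = E \<times> F"
    by auto
  have "measure_pmf.prob (Pi_pmf D dflt p) (E \<inter> F) = measure_pmf.prob (Pi_pmf (A \<union> B) dflt p) (E \<inter> F)"
    using A B by (intro prob_Pi_pmf_restrict[OF D _ depends_on_Int[OF dA dB]]) blast
  also have "\<dots> = measure_pmf.prob (pair_pmf PA PB) (E \<times> F)"
    unfolding Pi_pmf_union[OF fin AB] mrg_def[symmetric] PA_def[symmetric] PB_def[symmetric]
    by (simp add: preimage)
  also have "\<dots> = measure_pmf.prob (pair_pmf PA PB) ((E \<inter> set_pmf PA) \<times> (F \<inter> set_pmf PB))"
    by (subst measure_Int_set_pmf[symmetric]) (simp add: Times_Int_Times Int_ac)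
  also have "\<dots> = measure_pmf.prob PA E * measure_pmf.prob PB F"
    by (subst measure_pmf_prob_product) (auto intro: countable_subset simp: measure_Int_set_pmf)
  also have "\<dots> = measure_pmf.prob (Pi_pmf D dflt p) E * measure_pmf.prob (Pi_pmf D dflt p) F"
    unfolding PA_def PB_def using prob_Pi_pmf_restrict[OF D A dA] prob_Pi_pmf_restrict[OF D B dB] by simp
  finally show ?thesis .
qed

lemma prob_Pi_pmf_INT_indep:
  assumes D: "finite D" and I: "finite I"
    and G: "\<And>i. i \<in> I \<Longrightarrow> G i \<subseteq> D"
    and disj: "\<And>i j. i \<in> I \<Longrightarrow> j \<in> I \<Longrightarrow> i \<noteq> j \<Longrightarrow> G i \<inter> G j = {}"
    and dep: "\<And>i. i \<in> I \<Longrightarrow> depends_on (E i) (G i)"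
  shows "measure_pmf.prob (Pi_pmf D dflt p) {f. \<forall>i\<in>I. f \<in> E i} =
         (\<Prod>i\<in>I. measure_pmf.prob (Pi_pmf D dflt p) (E i))"
  using I G disj dep
proof (induction I rule: finite_induct)
  case (insert i I)
  have "{f. \<forall>j\<in>insert i I. f \<in> E j} = E i \<inter> {f. \<forall>j\<in>I. f \<in> E j}"
    by auto
  moreover have "measure_pmf.prob (Pi_pmf D dflt p) (E i \<inter> {f. \<forall>j\<in>I. f \<in> E j})
      = measure_pmf.prob (Pi_pmf D dflt p) (E i) * measure_pmf.prob (Pi_pmf D dflt p) {f. \<forall>j\<in>I. f \<in> E j}"
    by (rule prob_Pi_pmf_Int_indep[OF D, of "G i" "\<Union>j\<in>I. G j"])
      (use insert.prems insert.hyps(2) in \<open>auto intro!: depends_on_INT, blast\<close>)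
  ultimately show ?case
    using insert by simp
qed simp

abbreviation Pi_bernoulli :: "'a set \<Rightarrow> real \<Rightarrow> ('a \<Rightarrow> bool) pmf" where
  "Pi_bernoulli D p \<equiv> Pi_pmf D False (\<lambda>_. bernoulli_pmf p)"

lemma prob_Pi_bernoulli_card:
  assumes D: "finite D" and S: "S \<subseteq> D" and p: "0 \<le> p" "p \<le> 1"
  shows "measure_pmf.prob (Pi_bernoulli D p) {f. R (card {x \<in> S. f x})}
       = measure_pmf.prob (binomial_pmf (card S) p) {k. R k}"
proof -
  have "binomial_pmf (card S) p = map_pmf (\<lambda>f. card {x \<in> S. f x}) (Pi_bernoulli S p)"
    by (rule binomial_pmf_altdef') (use D S p finite_subset in auto)
  then show ?thesis
    by (simp add: vimage_def prob_Pi_pmf_restrict[OF D S depends_on_card])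
qed

lemma prob_Pi_bernoulli_card_ge1:
  assumes D: "finite D" and S: "S \<subseteq> D" and p: "0 \<le> p" "p \<le> 1"
  shows "measure_pmf.prob (Pi_bernoulli D p) {f. card {x \<in> S. f x} \<ge> 1} = 1 - (1 - p) ^ card S"
proof -
  have "measure_pmf.prob (binomial_pmf (card S) p) {k. k \<ge> 1}
      = 1 - measure_pmf.prob (binomial_pmf (card S) p) {0}"
    by (subst measure_pmf.prob_compl[symmetric]) (auto intro!: arg_cong[where f="measure_pmf.prob _"])
  then show ?thesis
    using prob_Pi_bernoulli_card[OF D S p, where R="\<lambda>k. k \<ge> 1"] p by (simp add: measure_pmf_single)
qed

lemma prob_Pi_bernoulli_card_ge2:
  assumes D: "finite D" and S: "S \<subseteq> D" and p: "0 \<le> p" "p \<le> 1"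
  shows "measure_pmf.prob (Pi_bernoulli D p) {f. card {x \<in> S. f x} \<ge> 2}
       = 1 - (1 - p) ^ card S - real (card S) * p * (1 - p) ^ (card S - 1)"
proof -
  have "measure_pmf.prob (binomial_pmf (card S) p) {k. k \<ge> 2}
      = 1 - measure_pmf.prob (binomial_pmf (card S) p) {0, 1}"
    by (subst measure_pmf.prob_compl[symmetric]) (auto intro!: arg_cong[where f="measure_pmf.prob _"])
  also have "measure_pmf.prob (binomial_pmf (card S) p) {0, 1}
      = (1 - p) ^ card S + real (card S) * p * (1 - p) ^ (card S - 1)"
    using p by (subst measure_measure_pmf_finite) auto
  finally show ?thesis
    using prob_Pi_bernoulli_card[OF D S p, where R="\<lambda>k. k \<ge> 2"] by simp
qed

lemma prob_Pi_bernoulli_coord: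
  assumes "finite D" and "s \<in> D" and "0 \<le> p" "p \<le> 1"
  shows "measure_pmf.prob (Pi_bernoulli D p) {f. f s} = p"
proof -
  have "measure_pmf.prob (Pi_bernoulli D p) {f. f s}
      = measure_pmf.prob (map_pmf (\<lambda>f. f s) (Pi_bernoulli D p)) {True}"
    by (simp add: vimage_def)
  then show ?thesis
    using assms by (simp add: Pi_pmf_component measure_pmf_single)
qed

lemma sum_subsets_eq_prob_Pi_bernoulli:
  assumes D: "finite D" and p: "0 \<le> p" "p \<le> 1"
  shows "(\<Sum>Y\<in>{Y. Y \<subseteq> D \<and> P Y}. p ^ card Y * (1 - p) ^ (card D - card Y))
       = measure_pmf.prob (Pi_bernoulli D p) {\<omega>. P {s \<in> D. \<omega> s}}"
proof -
  let ?M = "Pi_bernoulli D p"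
  define S where "S = {\<omega>. (\<forall>x. x \<notin> D \<longrightarrow> \<omega> x = False) \<and> P {s \<in> D. \<omega> s}}"
  have "S \<subseteq> PiE_dflt D False (\<lambda>_. UNIV)"
    unfolding S_def PiE_dflt_def by auto
  then have fS: "finite S"
    using D finite_subset by fastforce
  have "{s \<in> D. s \<in> Y} = Y" if "Y \<subseteq> D" for Y
    using that by auto
  then have bij: "bij_betw (\<lambda>\<omega>. {s \<in> D. \<omega> s}) S {Y. Y \<subseteq> D \<and> P Y}"
    by (intro bij_betwI[where g="\<lambda>Y s. s \<in> Y"]) (auto simp: S_def fun_eq_iff)
  have "measure_pmf.prob ?M {\<omega>. P {s \<in> D. \<omega> s}} = measure_pmf.prob ?M S"
    using set_Pi_pmf_subset[OF D, of False "\<lambda>_. bernoulli_pmf p"]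
    by (intro measure_eq_AE AE_pmfI) (auto simp: S_def)
  also have "\<dots> = (\<Sum>\<omega>\<in>S. pmf ?M \<omega>)"
    using fS by (simp add: measure_measure_pmf_finite)
  also have "\<dots> = (\<Sum>\<omega>\<in>S. p ^ card {s \<in> D. \<omega> s} * (1 - p) ^ (card D - card {s \<in> D. \<omega> s}))"
  proof (intro sum.cong refl)
    fix \<omega> assume w: "\<omega> \<in> S"
    have "pmf ?M \<omega> = (\<Prod>x\<in>D. if \<omega> x then p else 1 - p)"
      using w D p by (subst pmf_Pi') (auto simp: S_def intro!: prod.cong)
    also have "\<dots> = p ^ card {s \<in> D. \<omega> s} * (1 - p) ^ card {s \<in> D. \<not> \<omega> s}"
      by (simp add: prod.If_cases[OF D] Int_def Compl_eq)
    also have "{s \<in> D. \<not> \<omega> s} = D - {s \<in> D. \<omega> s}"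
      by auto
    finally show "pmf ?M \<omega> = p ^ card {s \<in> D. \<omega> s} * (1 - p) ^ (card D - card {s \<in> D. \<omega> s})"
      using D by (simp add: card_Diff_subset)
  qed
  also have "\<dots> = (\<Sum>Y\<in>{Y. Y \<subseteq> D \<and> P Y}. p ^ card Y * (1 - p) ^ (card D - card Y))"
    by (rule sum.reindex_bij_betw[OF bij])
  finally show ?thesis ..
qed

lemma expectation_indicator_sum:
  fixes M :: "'a pmf" and E :: "'i \<Rightarrow> 'a set"
  shows "measure_pmf.expectation M (\<lambda>\<omega>. \<Sum>i\<in>I. indicator (E i) \<omega>) = (\<Sum>i\<in>I. measure_pmf.prob M (E i))"
  by (subst Bochner_Integration.integral_sum) (auto simp: measure_pmf.emeasure_eq_measure)

lemma variance_indicator_sum: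
  fixes M :: "'a pmf" and E :: "'i \<Rightarrow> 'a set"
  assumes I: "finite I"
  shows "measure_pmf.variance M (\<lambda>\<omega>. \<Sum>i\<in>I. indicator (E i) \<omega>)
       = (\<Sum>i\<in>I. \<Sum>j\<in>I. measure_pmf.prob M (E i \<inter> E j)
             - measure_pmf.prob M (E i) * measure_pmf.prob M (E j))"
proof -
  define P where "P i = measure_pmf.prob M (E i)" for i
  have int: "integrable M (\<lambda>\<omega>. (indicator (E i) \<omega> - P i) * (indicator (E j) \<omega> - P j :: real))" for i j
  proof (intro measure_pmf.integrable_const_bound[where B = 1] AE_I2)
    have "\<bar>indicator A \<omega> - measure_pmf.prob M A\<bar> \<le> (1::real)" for A \<omega>
      using measure_pmf.prob_le_1[of M A] by (auto simp: indicator_def)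
    then show "norm ((indicator (E i) \<omega> - P i) * (indicator (E j) \<omega> - P j :: real)) \<le> 1" for \<omega>
      unfolding P_def real_norm_def abs_mult by (intro mult_le_one) auto
  qed simp
  have sq: "(\<lambda>\<omega>. ((\<Sum>i\<in>I. indicator (E i) \<omega>) - (\<Sum>i\<in>I. P i))\<^sup>2)
      = (\<lambda>\<omega>. \<Sum>i\<in>I. \<Sum>j\<in>I. (indicator (E i) \<omega> - P i) * (indicator (E j) \<omega> - P j :: real))"
    by (simp add: power2_eq_square sum_product flip: sum_subtractf)
  have cov: "measure_pmf.expectation M (\<lambda>\<omega>. (indicator (E i) \<omega> - P i) * (indicator (E j) \<omega> - P j))
      = measure_pmf.prob M (E i \<inter> E j) - P i * P j" for i j
  proof -
    have "(\<lambda>\<omega>. (indicator (E i) \<omega> - P i) * (indicator (E j) \<omega> - P j))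
        = (\<lambda>\<omega>. indicator (E i \<inter> E j) \<omega> - P j * indicator (E i) \<omega> - P i * indicator (E j) \<omega> + P i * P j :: real)"
      by (auto simp: fun_eq_iff indicator_def algebra_simps)
    then show ?thesis
      by (simp add: P_def measure_pmf.emeasure_eq_measure)
  qed
  show ?thesis
    unfolding expectation_indicator_sum sq P_def[symmetric]
    by (simp add: int Bochner_Integration.integral_sum Bochner_Integration.integrable_sum cov)
qed

text \<open>Pairs \<open>(i, j)\<close> with \<open>\<not> Dep i j\<close> have uncorrelated indicators, so only the pairs of the
  dependency relation \<open>Dep\<close> contribute to the variance.\<close>

lemma prob_indicator_sum_deviation_le:
  fixes M :: "'a pmf" and E :: "'i \<Rightarrow> 'a set" and a :: real
  assumes I: "finite I" and a: "a > 0"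
    and indep: "\<And>i j. i \<in> I \<Longrightarrow> j \<in> I \<Longrightarrow> \<not> Dep i j \<Longrightarrow>
          measure_pmf.prob M (E i \<inter> E j) = measure_pmf.prob M (E i) * measure_pmf.prob M (E j)"
  shows "measure_pmf.prob M {\<omega>. a \<le> \<bar>(\<Sum>i\<in>I. indicator (E i) \<omega>) - (\<Sum>i\<in>I. measure_pmf.prob M (E i))\<bar>}
         \<le> (\<Sum>i\<in>I. \<Sum>j\<in>{j\<in>I. Dep i j}. measure_pmf.prob M (E i \<inter> E j)) / a\<^sup>2"
proof -
  let ?X = "\<lambda>\<omega>. \<Sum>i\<in>I. indicator (E i) \<omega> :: real"
  have "\<bar>?X \<omega>\<bar> \<le> real (card I)" for \<omega>
    using sum_bounded_above[of I "\<lambda>i. indicator (E i) \<omega> :: real" 1]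
    by (simp add: sum_nonneg indicator_le_1)
  then have "integrable M (\<lambda>\<omega>. (?X \<omega>)\<^sup>2)"
    by (intro measure_pmf.integrable_const_bound[where B = "real (card I)^2"] AE_I2)
       (auto simp: abs_le_square_iff[symmetric])
  then have "measure_pmf.prob M {\<omega>. a \<le> \<bar>?X \<omega> - (\<Sum>i\<in>I. measure_pmf.prob M (E i))\<bar>}
      \<le> measure_pmf.variance M ?X / a\<^sup>2"
    using measure_pmf.Chebyshev_inequality[of ?X M a] a by (simp add: expectation_indicator_sum)
  also have "measure_pmf.variance M ?X
      \<le> (\<Sum>i\<in>I. \<Sum>j\<in>{j\<in>I. Dep i j}. measure_pmf.prob M (E i \<inter> E j))"
    unfolding variance_indicator_sum[OF I]
  proof (intro sum_mono)
    fix i assume "i \<in> I"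
    then have "(\<Sum>j\<in>I. measure_pmf.prob M (E i \<inter> E j) - measure_pmf.prob M (E i) * measure_pmf.prob M (E j))
        \<le> (\<Sum>j\<in>I. if Dep i j then measure_pmf.prob M (E i \<inter> E j) else 0)"
      using indep by (intro sum_mono) auto
    then show "(\<Sum>j\<in>I. measure_pmf.prob M (E i \<inter> E j) - measure_pmf.prob M (E i) * measure_pmf.prob M (E j))
        \<le> (\<Sum>j\<in>{j\<in>I. Dep i j}. measure_pmf.prob M (E i \<inter> E j))"
      by (simp add: sum.inter_filter I)
  qed
  finally show ?thesis
    using a by (simp add: divide_right_mono)
qed

definition cofaces :: "nat \<Rightarrow> nat \<Rightarrow> nat set \<Rightarrow> nat set set" where
  "cofaces n d t = {s \<in> dsimplices n d. t \<subseteq> s}"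

lemma cofaces_subset: "cofaces n d t \<subseteq> dsimplices n d"
  unfolding cofaces_def by auto

lemma finite_cofaces: "finite (cofaces n d t)"
  by (rule finite_subset[OF cofaces_subset finite_dsimplices])

lemma mem_cofaces: "s \<in> dsimplices n d \<Longrightarrow> t \<in> facets d s \<Longrightarrow> s \<in> cofaces n d t"
  unfolding facets_def cofaces_def by auto

lemma card_cofaces:
  assumes t: "t \<in> ridges n d"
  shows "card (cofaces n d t) = n - d"
proof -
  have tn: "t \<subseteq> {..<n}" "card t = d" "finite t"
    using t finite_subset unfolding ridges_def by auto
  \<comment> \<open>a coface of \<open>t\<close> is \<open>t\<close> plus one further vertex\<close>
  have "cofaces n d t = (\<lambda>x. insert x t) ` ({..<n} - t)"
  proof
    show "cofaces n d t \<subseteq> (\<lambda>x. insert x t) ` ({..<n} - t)"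
    proof
      fix s assume "s \<in> cofaces n d t"
      then have s: "s \<subseteq> {..<n}" "card s = d + 1" "t \<subseteq> s" "finite s"
        using finite_subset unfolding cofaces_def dsimplices_def by auto
      then have "card (s - t) = 1"
        using tn by (simp add: card_Diff_subset)
      then obtain x where "s - t = {x}"
        by (rule card_1_singletonE)
      then show "s \<in> (\<lambda>x. insert x t) ` ({..<n} - t)"
        using s by blast
    qed
  qed (use tn in \<open>auto simp: cofaces_def dsimplices_def\<close>)
  moreover have "inj_on (\<lambda>x. insert x t) ({..<n} - t)"
    by (rule inj_onI) (metis Diff_iff insertE insertI1)
  ultimately show ?thesis
    using tn by (simp add: card_image card_Diff_subset)
qed

lemma card_cofaces_Diff:
  assumes "s \<in> dsimplices n d" "t \<in> facets d s"
  shows "card (cofaces n d t - {s}) = n - d - 1"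
  using card_cofaces[OF subsetD[OF facets_subset_ridges]] mem_cofaces finite_cofaces assms by simp

text \<open>Two distinct facets of \<open>s\<close> span \<open>s\<close>, so \<open>s\<close> is their only common coface.\<close>

lemma cofaces_Diff_disjoint:
  assumes s: "s \<in> dsimplices n d" and t: "t \<in> facets d s" "t' \<in> facets d s" "t \<noteq> t'"
  shows "(cofaces n d t - {s}) \<inter> (cofaces n d t' - {s}) = {}"
proof (rule ccontr)
  assume "(cofaces n d t - {s}) \<inter> (cofaces n d t' - {s}) \<noteq> {}"
  then obtain x where x: "x \<in> cofaces n d t" "x \<in> cofaces n d t'" "x \<noteq> s"
    by blast
  note sD = dsimplicesD[OF s]
  have tt: "t \<subseteq> s" "card t = d" "t' \<subseteq> s" "card t' = d" "finite t" "finite t'"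
    using t finite_subset[OF _ sD(3)] unfolding facets_def by auto
  have "\<not> t' \<subseteq> t"
    using card_subset_eq[of t t'] tt t(3) by auto
  then have "card t < card (t \<union> t')"
    using tt by (intro psubset_card_mono) auto
  then have "t \<union> t' = s"
    using tt sD card_seteq[of s "t \<union> t'"] by simp
  moreover have xD: "x \<in> dsimplices n d" "t \<union> t' \<subseteq> x"
    using x unfolding cofaces_def by auto
  ultimately have "s = x"
    using card_subset_eq[of x s] dsimplicesD[OF xD(1)] sD by simp
  then show False
    using x by simp
qed

lemma cdeg_Collect_eq: "cdeg {s \<in> dsimplices n d. \<omega> s} t = card {x \<in> cofaces n d t. \<omega> x}"
  unfolding cdeg_def cofaces_def by (rule arg_cong[where f = card]) auto

definition shared_event :: "nat \<Rightarrow> nat \<Rightarrow> nat set \<Rightarrow> (nat set \<Rightarrow> bool) set" where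
  "shared_event n d t = {\<omega>. card {x \<in> cofaces n d t. \<omega> x} \<ge> 2}"

definition covered_event :: "nat \<Rightarrow> nat \<Rightarrow> nat set \<Rightarrow> nat set \<Rightarrow> (nat set \<Rightarrow> bool) set" where
  "covered_event n d s t = {\<omega>. card {x \<in> cofaces n d t - {s}. \<omega> x} \<ge> 1}"

definition no_free_facet_event :: "nat \<Rightarrow> nat \<Rightarrow> nat set \<Rightarrow> (nat set \<Rightarrow> bool) set" where
  "no_free_facet_event n d s = {\<omega>. \<omega> s} \<inter> {\<omega>. \<forall>t\<in>facets d s. \<omega> \<in> covered_event n d s t}"

definition no_free_facet_support :: "nat \<Rightarrow> nat \<Rightarrow> nat set \<Rightarrow> nat set set" where
  "no_free_facet_support n d s = insert s (\<Union>t\<in>facets d s. cofaces n d t)"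

lemma mem_no_free_facet_event_iff:
  assumes s: "s \<in> dsimplices n d"
  shows "\<omega> \<in> no_free_facet_event n d s \<longleftrightarrow> \<omega> s \<and> free_facets d {s \<in> dsimplices n d. \<omega> s} s = 0"
proof -
  let ?Y = "{s \<in> dsimplices n d. \<omega> s}"
  have "free_facets d ?Y s = 0 \<longleftrightarrow> (\<forall>t\<in>facets d s. cdeg ?Y t \<noteq> 1)"
    unfolding free_facets_def using finite_facets[OF s] by auto
  moreover have "cdeg ?Y t = Suc (card {x \<in> cofaces n d t - {s}. \<omega> x})" if "t \<in> facets d s" "\<omega> s" for t
  proof -
    have "{x \<in> cofaces n d t. \<omega> x} = insert s {x \<in> cofaces n d t - {s}. \<omega> x}"
      using mem_cofaces[OF s that(1)] that(2) by auto
    then show ?thesis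
      unfolding cdeg_Collect_eq using finite_cofaces by simp
  qed
  ultimately show ?thesis
    unfolding no_free_facet_event_def covered_event_def by (auto simp: Suc_le_eq)
qed

lemma v_fun_eq_indicator_sums:
  "real_of_int (v_fun n d {s \<in> dsimplices n d. \<omega> s})
     = (\<Sum>s\<in>dsimplices n d. indicator (no_free_facet_event n d s) \<omega>)
       - (\<Sum>t\<in>ridges n d. indicator (shared_event n d t) \<omega>)"
proof -
  let ?Y = "{s \<in> dsimplices n d. \<omega> s}"
  have "{s \<in> ?Y. free_facets d ?Y s = 0} = {s \<in> dsimplices n d. \<omega> \<in> no_free_facet_event n d s}"
    using mem_no_free_facet_event_iff by blast
  moreover have "{t \<in> ridges n d. cdeg ?Y t \<ge> 2} = {t \<in> ridges n d. \<omega> \<in> shared_event n d t}"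
    unfolding shared_event_def cdeg_Collect_eq by simp
  ultimately show ?thesis
    using v_fun_eq[of ?Y n d] finite_dsimplices finite_ridges
    by (simp add: indicator_def of_bool_def sum.If_cases Int_def)
qed

lemma depends_on_shared_event: "depends_on (shared_event n d t) (cofaces n d t)"
  unfolding shared_event_def by (rule depends_on_card)

lemma depends_on_covered_events:
  "depends_on {\<omega>. \<forall>t\<in>facets d s. \<omega> \<in> covered_event n d s t} (\<Union>t\<in>facets d s. cofaces n d t - {s})"
  unfolding covered_event_def by (rule depends_on_INT) (rule depends_on_card)

lemma no_free_facet_support_subset:
  "s \<in> dsimplices n d \<Longrightarrow> no_free_facet_support n d s \<subseteq> dsimplices n d"
  unfolding no_free_facet_support_def using cofaces_subset by blast

lemma depends_on_no_free_facet_event: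
  "depends_on (no_free_facet_event n d s) (no_free_facet_support n d s)"
  unfolding no_free_facet_event_def
  by (rule depends_on_mono[OF depends_on_Int[OF depends_on_coord depends_on_covered_events]])
     (auto simp: no_free_facet_support_def)

text \<open>The probabilities that a ridge lies in at least two \<open>d\<close>-simplices of \<open>Y\<close>, and that a
  \<open>d\<close>-simplex belongs to \<open>Y\<close> and has no free facet.\<close>

definition shared_prob :: "nat \<Rightarrow> nat \<Rightarrow> real \<Rightarrow> real" where
  "shared_prob n d p = 1 - (1 - p)^(n - d) - real (n - d) * p * (1 - p)^(n - d - 1)"

definition no_free_facet_prob :: "nat \<Rightarrow> nat \<Rightarrow> real \<Rightarrow> real" where
  "no_free_facet_prob n d p = p * (1 - (1 - p)^(n - d - 1))^(d + 1)"

context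
  fixes p :: real
  assumes p: "0 \<le> p" "p \<le> 1"
begin

lemma prob_shared_event:
  assumes "t \<in> ridges n d"
  shows "measure_pmf.prob (Pi_bernoulli (dsimplices n d) p) (shared_event n d t) = shared_prob n d p"
  using prob_Pi_bernoulli_card_ge2[OF finite_dsimplices cofaces_subset p] card_cofaces[OF assms]
  unfolding shared_event_def shared_prob_def by simp

lemma prob_no_free_facet_event:
  assumes s: "s \<in> dsimplices n d"
  shows "measure_pmf.prob (Pi_bernoulli (dsimplices n d) p) (no_free_facet_event n d s) = no_free_facet_prob n d p"
proof -
  let ?M = "Pi_bernoulli (dsimplices n d) p"
  have sub: "cofaces n d t - {s} \<subseteq> dsimplices n d" for t
    using cofaces_subset by blast
  have "measure_pmf.prob ?M (no_free_facet_event n d s)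
      = measure_pmf.prob ?M {\<omega>. \<omega> s} * measure_pmf.prob ?M {\<omega>. \<forall>t\<in>facets d s. \<omega> \<in> covered_event n d s t}"
    unfolding no_free_facet_event_def
    by (rule prob_Pi_pmf_Int_indep[OF finite_dsimplices _ _ _ depends_on_coord depends_on_covered_events])
       (use s cofaces_subset in auto)
  also have "measure_pmf.prob ?M {\<omega>. \<forall>t\<in>facets d s. \<omega> \<in> covered_event n d s t}
      = (\<Prod>t\<in>facets d s. measure_pmf.prob ?M (covered_event n d s t))"
    unfolding covered_event_def
    by (rule prob_Pi_pmf_INT_indep[OF finite_dsimplices finite_facets[OF s] sub
          cofaces_Diff_disjoint[OF s] depends_on_card])
  also have "\<dots> = (\<Prod>t\<in>facets d s. 1 - (1 - p)^(n - d - 1))"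
  proof (rule prod.cong[OF refl])
    fix t assume "t \<in> facets d s"
    then show "measure_pmf.prob ?M (covered_event n d s t) = 1 - (1 - p)^(n - d - 1)"
      using prob_Pi_bernoulli_card_ge1[OF finite_dsimplices sub p] card_cofaces_Diff[OF s]
      unfolding covered_event_def by simp
  qed
  finally show ?thesis
    using prob_Pi_bernoulli_coord[OF finite_dsimplices s p] card_facets[OF s]
    by (simp add: no_free_facet_prob_def)
qed

lemma prob_no_free_facet_event_Int_le:
  assumes s: "s \<in> dsimplices n d" and s': "s' \<in> dsimplices n d"
  shows "measure_pmf.prob (Pi_bernoulli (dsimplices n d) p) (no_free_facet_event n d s \<inter> no_free_facet_event n d s')
    \<le> (if s = s' then p else p\<^sup>2)"
proof -
  let ?M = "Pi_bernoulli (dsimplices n d) p"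
  have "measure_pmf.prob ?M (no_free_facet_event n d s \<inter> no_free_facet_event n d s')
      \<le> measure_pmf.prob ?M ({\<omega>. \<omega> s} \<inter> {\<omega>. \<omega> s'})"
    by (rule measure_pmf.finite_measure_mono) (auto simp: no_free_facet_event_def)
  also have "\<dots> = (if s = s' then p else p\<^sup>2)"
  proof (cases "s = s'")
    case False
    then have "measure_pmf.prob ?M ({\<omega>. \<omega> s} \<inter> {\<omega>. \<omega> s'})
        = measure_pmf.prob ?M {\<omega>. \<omega> s} * measure_pmf.prob ?M {\<omega>. \<omega> s'}"
      using s s' by (intro prob_Pi_pmf_Int_indep[OF finite_dsimplices _ _ _ depends_on_coord depends_on_coord]) auto
    then show ?thesis
      using False prob_Pi_bernoulli_coord[OF finite_dsimplices _ p] s s' by (simp add: power2_eq_square)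
  qed (use prob_Pi_bernoulli_coord[OF finite_dsimplices s p] in simp)
  finally show ?thesis .
qed

end

lemma card_ridges_sharing_coface:
  assumes t: "t \<in> ridges n d"
  shows "card {t' \<in> ridges n d. cofaces n d t \<inter> cofaces n d t' \<noteq> {}} \<le> n * (d + 1)"
proof -
  have tn: "t \<subseteq> {..<n}" "card t = d" "finite t"
    using t finite_subset unfolding ridges_def by auto
  define SG where "SG = (SIGMA x:{..<n}. insert x t)"
  have fSG: "finite SG"
    unfolding SG_def using tn by auto
  \<comment> \<open>\<open>t'\<close> is obtained from a common coface \<open>insert x t\<close> by deleting a vertex \<open>y\<close>\<close>
  have covered: "{t' \<in> ridges n d. cofaces n d t \<inter> cofaces n d t' \<noteq> {}} \<subseteq> (\<lambda>(x, y). insert x t - {y}) ` SG"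
  proof
    fix t' assume "t' \<in> {t' \<in> ridges n d. cofaces n d t \<inter> cofaces n d t' \<noteq> {}}"
    then obtain s where t': "t' \<in> ridges n d" and s: "s \<in> dsimplices n d" "t \<subseteq> s" "t' \<subseteq> s"
      unfolding cofaces_def by blast
    note sD = dsimplicesD[OF s(1)]
    have "card t' = d" "finite t'"
      using t' s(3) sD(3) finite_subset unfolding ridges_def by auto
    then have "card (s - t) = 1" "card (s - t') = 1"
      using sD tn s by (simp_all add: card_Diff_subset)
    then obtain x y where x: "s - t = {x}" and y: "s - t' = {y}"
      by (meson card_1_singletonE)
    then have "s = insert x t" "t' = s - {y}" "x < n"
      using s sD(1) by blast+
    then show "t' \<in> (\<lambda>(x, y). insert x t - {y}) ` SG"
      unfolding SG_def using y by (intro image_eqI[of _ _ "(x, y)"]) auto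
  qed
  have "card {t' \<in> ridges n d. cofaces n d t \<inter> cofaces n d t' \<noteq> {}} \<le> card SG"
    by (rule order_trans[OF card_mono[OF finite_imageI[OF fSG] covered] card_image_le[OF fSG]])
  also have "card SG = (\<Sum>x<n. card (insert x t))"
    unfolding SG_def using tn by simp
  also have "\<dots> \<le> (\<Sum>x<n. d + 1)"
    by (intro sum_mono) (use tn in \<open>simp add: card_insert_if\<close>)
  finally show ?thesis
    by simp
qed

lemma card_Int_no_free_facet_support:
  assumes s: "s \<in> dsimplices n d" and z: "z \<in> no_free_facet_support n d s"
  shows "card (z \<inter> s) \<ge> d"
proof (cases "z = s")
  case False
  then obtain t where t: "t \<in> facets d s" "z \<in> cofaces n d t"
    using z unfolding no_free_facet_support_def by blast
  then have "t \<subseteq> z \<inter> s"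
    unfolding facets_def cofaces_def by auto
  then show ?thesis
    using card_mono[of "z \<inter> s" t] dsimplicesD[OF s] t(1) unfolding facets_def by auto
qed (use dsimplicesD[OF s] in simp)

lemma card_Int_ge_if_supports_meet:
  assumes s: "s \<in> dsimplices n d" and s': "s' \<in> dsimplices n d"
    and z: "z \<in> no_free_facet_support n d s" "z \<in> no_free_facet_support n d s'"
  shows "card (s \<inter> s') \<ge> d - 1"
proof -
  have zD: "card z = d + 1" "finite z"
    using dsimplicesD no_free_facet_support_subset[OF s] z(1) by blast+
  let ?A = "z \<inter> s" and ?B = "z \<inter> s'"
  have "card ?A + card ?B = card (?A \<union> ?B) + card (?A \<inter> ?B)"
    using zD by (intro card_Un_Int) auto
  moreover have "card (?A \<union> ?B) \<le> d + 1"
    using card_mono[OF zD(2), of "?A \<union> ?B"] zD by auto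
  moreover have "card (?A \<inter> ?B) \<le> card (s \<inter> s')"
    using dsimplicesD[OF s] by (intro card_mono) auto
  ultimately show ?thesis
    using card_Int_no_free_facet_support[OF s z(1)] card_Int_no_free_facet_support[OF s' z(2)] by linarith
qed

lemma card_dsimplices_supports_meet:
  assumes s: "s \<in> dsimplices n d" and d: "d \<ge> 1"
  shows "card {s' \<in> dsimplices n d. s' \<noteq> s \<and> no_free_facet_support n d s \<inter> no_free_facet_support n d s' \<noteq> {}}
    \<le> 2^(d+1) * n\<^sup>2"
proof -
  note sD = dsimplicesD[OF s]
  define U where "U = {u. u \<subseteq> s \<and> card u = d - 1}"
  define Dm where "Dm = U \<times> {..<n} \<times> {..<n}"
  have fDm: "finite Dm"
    unfolding Dm_def U_def using sD by auto
  \<comment> \<open>such an \<open>s'\<close> consists of \<open>d - 1\<close> vertices of \<open>s\<close> and two further vertices\<close>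
  have covered: "{s' \<in> dsimplices n d. s' \<noteq> s \<and> no_free_facet_support n d s \<inter> no_free_facet_support n d s' \<noteq> {}}
      \<subseteq> (\<lambda>(u, a, b). insert a (insert b u)) ` Dm"
  proof
    fix s' assume "s' \<in> {s' \<in> dsimplices n d. s' \<noteq> s \<and> no_free_facet_support n d s \<inter> no_free_facet_support n d s' \<noteq> {}}"
    then obtain z where s': "s' \<in> dsimplices n d"
      and z: "z \<in> no_free_facet_support n d s" "z \<in> no_free_facet_support n d s'"
      by blast
    note sD' = dsimplicesD[OF s']
    obtain u where u: "u \<subseteq> s \<inter> s'" "card u = d - 1" "finite u"
      using card_Int_ge_if_supports_meet[OF s s' z] by (rule obtain_subset_with_card_n)
    have "card (s' - u) = 2"
      using sD' u d by (simp add: card_Diff_subset)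
    then obtain a b where ab: "s' - u = {a, b}"
      by (auto simp: card_2_iff)
    then have "s' = insert a (insert b u)" "a < n" "b < n" "u \<in> U"
      using u sD' unfolding U_def by blast+
    then show "s' \<in> (\<lambda>(u, a, b). insert a (insert b u)) ` Dm"
      unfolding Dm_def by (intro image_eqI[of _ _ "(u, a, b)"]) auto
  qed
  have "card {s' \<in> dsimplices n d. s' \<noteq> s \<and> no_free_facet_support n d s \<inter> no_free_facet_support n d s' \<noteq> {}}
      \<le> card Dm"
    by (rule order_trans[OF card_mono[OF finite_imageI[OF fDm] covered] card_image_le[OF fDm]])
  also have "card Dm = ((d+1) choose (d-1)) * (n * n)"
    unfolding Dm_def U_def using n_subsets[OF sD(3), of "d - 1"] sD by (simp add: card_cartesian_product)
  also have "\<dots> \<le> 2^(d+1) * (n * n)"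
    by (intro mult_right_mono binomial_le_pow2) simp
  finally show ?thesis
    by (simp add: power2_eq_square)
qed

lemma sum_prob_no_free_facet_event_Int_le:
  assumes p: "0 \<le> p" "p \<le> 1" and s: "s \<in> dsimplices n d" and d: "d \<ge> 1"
  shows "(\<Sum>s'\<in>{s' \<in> dsimplices n d. no_free_facet_support n d s \<inter> no_free_facet_support n d s' \<noteq> {}}.
      measure_pmf.prob (Pi_bernoulli (dsimplices n d) p) (no_free_facet_event n d s \<inter> no_free_facet_event n d s'))
    \<le> p + 2^(d+1) * (real n)\<^sup>2 * p\<^sup>2"
proof -
  let ?P = "\<lambda>s'. measure_pmf.prob (Pi_bernoulli (dsimplices n d) p) (no_free_facet_event n d s \<inter> no_free_facet_event n d s')"
  define Others where
    "Others = {s' \<in> dsimplices n d. s' \<noteq> s \<and> no_free_facet_support n d s \<inter> no_free_facet_support n d s' \<noteq> {}}"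
  have fin: "finite Others"
    unfolding Others_def using finite_dsimplices by auto
  have "(\<Sum>s'\<in>{s' \<in> dsimplices n d. no_free_facet_support n d s \<inter> no_free_facet_support n d s' \<noteq> {}}. ?P s')
      \<le> (\<Sum>s'\<in>insert s Others. ?P s')"
    by (rule sum_mono2) (use fin in \<open>auto simp: Others_def\<close>)
  also have "\<dots> = ?P s + (\<Sum>s'\<in>Others. ?P s')"
    using fin by (simp add: Others_def)
  also have "?P s \<le> p"
    using prob_no_free_facet_event_Int_le[OF p s s] by simp
  also have "(\<Sum>s'\<in>Others. ?P s') \<le> real (card Others) * p\<^sup>2"
  proof (rule sum_bounded_above)
    fix s' assume "s' \<in> Others"
    then have "s' \<in> dsimplices n d" "s \<noteq> s'"
      unfolding Others_def by auto
    then show "?P s' \<le> p\<^sup>2"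
      using prob_no_free_facet_event_Int_le[OF p s, of s'] by simp
  qed
  also have "real (card Others) \<le> real (2^(d+1) * n\<^sup>2)"
    using card_dsimplices_supports_meet[OF s d] unfolding Others_def by (simp only: of_nat_le_iff)
  finally show ?thesis
    by (simp add: mult_right_mono)
qed

section \<open>Second moment bounds\<close>

context
  fixes p a :: real
  assumes p: "0 \<le> p" "p \<le> 1" and a: "a > 0"
begin

lemma prob_shared_count_deviation_le:
  "measure_pmf.prob (Pi_bernoulli (dsimplices n d) p)
     {\<omega>. a \<le> \<bar>(\<Sum>t\<in>ridges n d. indicator (shared_event n d t) \<omega>) - real (card (ridges n d)) * shared_prob n d p\<bar>}
   \<le> real (card (ridges n d)) * (real n * (real d + 1)) / a\<^sup>2"
proof -
  let ?M = "Pi_bernoulli (dsimplices n d) p"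
  let ?Dep = "\<lambda>t t'. cofaces n d t \<inter> cofaces n d t' \<noteq> {}"
  have mean: "real (card (ridges n d)) * shared_prob n d p = (\<Sum>t\<in>ridges n d. measure_pmf.prob ?M (shared_event n d t))"
    using prob_shared_event[OF p] by simp
  have "measure_pmf.prob ?M
     {\<omega>. a \<le> \<bar>(\<Sum>t\<in>ridges n d. indicator (shared_event n d t) \<omega>) - real (card (ridges n d)) * shared_prob n d p\<bar>}
   \<le> (\<Sum>t\<in>ridges n d. \<Sum>t'\<in>{t'\<in>ridges n d. ?Dep t t'}. measure_pmf.prob ?M (shared_event n d t \<inter> shared_event n d t')) / a\<^sup>2"
    unfolding mean
    by (rule prob_indicator_sum_deviation_le[OF finite_ridges a])
       (simp add: prob_Pi_pmf_Int_indep[OF finite_dsimplices cofaces_subset cofaces_subset _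
          depends_on_shared_event depends_on_shared_event])
  also have "\<dots> \<le> real (card (ridges n d)) * (real n * (real d + 1)) / a\<^sup>2"
  proof (intro divide_right_mono sum_bounded_above)
    fix t assume t: "t \<in> ridges n d"
    have "(\<Sum>t'\<in>{t'\<in>ridges n d. ?Dep t t'}. measure_pmf.prob ?M (shared_event n d t \<inter> shared_event n d t'))
        \<le> real (card {t'\<in>ridges n d. ?Dep t t'}) * 1"
      by (rule sum_bounded_above) (rule measure_pmf.prob_le_1)
    also have "\<dots> \<le> real (n * (d + 1))"
      using card_ridges_sharing_coface[OF t] by (simp only: mult_1_right of_nat_le_iff)
    finally show "(\<Sum>t'\<in>{t'\<in>ridges n d. ?Dep t t'}. measure_pmf.prob ?M (shared_event n d t \<inter> shared_event n d t'))
        \<le> real n * (real d + 1)"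
      by (simp add: algebra_simps)
  qed simp
  finally show ?thesis .
qed

lemma prob_no_free_facet_count_deviation_le:
  assumes d: "d \<ge> 1"
  shows "measure_pmf.prob (Pi_bernoulli (dsimplices n d) p)
     {\<omega>. a \<le> \<bar>(\<Sum>s\<in>dsimplices n d. indicator (no_free_facet_event n d s) \<omega>)
                - real (card (dsimplices n d)) * no_free_facet_prob n d p\<bar>}
   \<le> real (card (dsimplices n d)) * (p + 2^(d+1) * (real n)\<^sup>2 * p\<^sup>2) / a\<^sup>2"
proof -
  let ?M = "Pi_bernoulli (dsimplices n d) p"
  let ?Dep = "\<lambda>s s'. no_free_facet_support n d s \<inter> no_free_facet_support n d s' \<noteq> {}"
  let ?P = "\<lambda>s s'. measure_pmf.prob ?M (no_free_facet_event n d s \<inter> no_free_facet_event n d s')"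
  have mean: "real (card (dsimplices n d)) * no_free_facet_prob n d p
      = (\<Sum>s\<in>dsimplices n d. measure_pmf.prob ?M (no_free_facet_event n d s))"
    using prob_no_free_facet_event[OF p] by simp
  have "measure_pmf.prob ?M
     {\<omega>. a \<le> \<bar>(\<Sum>s\<in>dsimplices n d. indicator (no_free_facet_event n d s) \<omega>)
                - real (card (dsimplices n d)) * no_free_facet_prob n d p\<bar>}
   \<le> (\<Sum>s\<in>dsimplices n d. \<Sum>s'\<in>{s'\<in>dsimplices n d. ?Dep s s'}. ?P s s') / a\<^sup>2"
    unfolding mean
    by (rule prob_indicator_sum_deviation_le[OF finite_dsimplices a])
       (simp add: prob_Pi_pmf_Int_indep[OF finite_dsimplices no_free_facet_support_subset
          no_free_facet_support_subset _ depends_on_no_free_facet_event depends_on_no_free_facet_event])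
  also have "\<dots> \<le> real (card (dsimplices n d)) * (p + 2^(d+1) * (real n)\<^sup>2 * p\<^sup>2) / a\<^sup>2"
    by (intro divide_right_mono sum_bounded_above sum_prob_no_free_facet_event_Int_le p d) simp_all
  finally show ?thesis .
qed

end

lemma prob_Yd_eq:
  assumes "0 \<le> p" "p \<le> 1"
  shows "prob_Yd n d p P = measure_pmf.prob (Pi_bernoulli (dsimplices n d) p) {\<omega>. P {s \<in> dsimplices n d. \<omega> s}}"
  unfolding prob_Yd_def by (rule sum_subsets_eq_prob_Pi_bernoulli[OF finite_dsimplices assms])

text \<open>If \<open>E F - E H \<ge> 2 a\<close>, then \<open>v(Y) = F - H \<le> 0\<close> forces \<open>F\<close> or \<open>H\<close> to deviate from its mean by \<open>a\<close>.\<close>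

lemma prob_Yd_v_fun_nonpos_le:
  assumes p: "0 \<le> p" "p \<le> 1" and d: "d \<ge> 1" and a: "a > 0"
    and gap: "real (card (dsimplices n d)) * no_free_facet_prob n d p
      - real (card (ridges n d)) * shared_prob n d p \<ge> 2 * a"
  shows "prob_Yd n d p (\<lambda>Y. v_fun n d Y \<le> 0)
     \<le> (real (card (dsimplices n d)) * (p + 2^(d+1) * (real n)\<^sup>2 * p\<^sup>2)
         + real (card (ridges n d)) * (real n * (real d + 1))) / a\<^sup>2"
proof -
  let ?M = "Pi_bernoulli (dsimplices n d) p"
  define F where "F \<omega> = (\<Sum>s\<in>dsimplices n d. indicator (no_free_facet_event n d s) \<omega>) 
    - real (card (dsimplices n d)) * no_free_facet_prob n d p" for \<omega>
  define H where "H \<omega> = (\<Sum>t\<in>ridges n d. indicator (shared_event n d t) \<omega>)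
    - real (card (ridges n d)) * shared_prob n d p" for \<omega>
  have "{\<omega>. v_fun n d {s \<in> dsimplices n d. \<omega> s} \<le> 0} \<subseteq> {\<omega>. a \<le> \<bar>F \<omega>\<bar>} \<union> {\<omega>. a \<le> \<bar>H \<omega>\<bar>}"
  proof
    fix \<omega> assume "\<omega> \<in> {\<omega>. v_fun n d {s \<in> dsimplices n d. \<omega> s} \<le> 0}"
    then have "F \<omega> - H \<omega> \<le> - 2 * a"
      using v_fun_eq_indicator_sums[of n d \<omega>] gap unfolding F_def H_def by simp
    then show "\<omega> \<in> {\<omega>. a \<le> \<bar>F \<omega>\<bar>} \<union> {\<omega>. a \<le> \<bar>H \<omega>\<bar>}"
      by auto
  qed
  then have "prob_Yd n d p (\<lambda>Y. v_fun n d Y \<le> 0) \<le> measure_pmf.prob ?M ({\<omega>. a \<le> \<bar>F \<omega>\<bar>} \<union> {\<omega>. a \<le> \<bar>H \<omega>\<bar>})"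
    unfolding prob_Yd_eq[OF p] by (rule measure_pmf.finite_measure_mono) simp
  also have "\<dots> \<le> measure_pmf.prob ?M {\<omega>. a \<le> \<bar>F \<omega>\<bar>} + measure_pmf.prob ?M {\<omega>. a \<le> \<bar>H \<omega>\<bar>}"
    by (rule measure_subadditive) (simp_all add: measure_pmf.emeasure_eq_measure)
  also have "\<dots> \<le> real (card (dsimplices n d)) * (p + 2^(d+1) * (real n)\<^sup>2 * p\<^sup>2) / a\<^sup>2
      + real (card (ridges n d)) * (real n * (real d + 1)) / a\<^sup>2"
    unfolding F_def H_def
    by (intro add_mono prob_no_free_facet_count_deviation_le prob_shared_count_deviation_le p a d)
  finally show ?thesis
    by (simp add: add_divide_distrib)
qed

section \<open>Asymptotics\<close>

lemma tendsto_one_minus_div_power: "(\<lambda>n. (1 - c / real n) ^ (n - k)) \<longlonglongrightarrow> exp (-c)"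
proof -
  have "(\<lambda>n. (1 + (-c) / real n) ^ n / (1 - c / real n) ^ k) \<longlonglongrightarrow> exp (-c) / 1 ^ k"
    by (intro tendsto_divide tendsto_power tendsto_exp_limit_sequentially) (real_asymp, simp)
  moreover have "\<forall>\<^sub>F n in sequentially. (1 + (-c) / real n) ^ n / (1 - c / real n) ^ k = (1 - c / real n) ^ (n - k)"
  proof -
    have "\<forall>\<^sub>F n in sequentially. real n > \<bar>c\<bar> \<and> n \<ge> k"
      by (intro eventually_conj) real_asymp+
    then show ?thesis
    proof eventually_elim
      case (elim n)
      then have "1 - c / real n \<noteq> 0"
        by (auto simp: field_simps split: if_splits)
      then show ?case
        using elim by (simp add: power_diff)
    qed
  qed
  ultimately show ?thesis
    by (auto intro: Lim_transform_eventually)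
qed

lemma tendsto_diff_times_div: "(\<lambda>n. real (n - d) * (c / real n)) \<longlonglongrightarrow> c"
proof -
  have "(\<lambda>n. (real n - real d) * (c / real n)) \<longlonglongrightarrow> c"
    by real_asymp
  moreover have "\<forall>\<^sub>F n in sequentially. (real n - real d) * (c / real n) = real (n - d) * (c / real n)"
    using eventually_ge_at_top[of d] by eventually_elim (simp add: of_nat_diff)
  ultimately show ?thesis
    by (rule Lim_transform_eventually)
qed

lemma tendsto_expectation_gap:
  "(\<lambda>n. real (n - d) / (real d + 1) * no_free_facet_prob n d (c / real n) - shared_prob n d (c / real n))
     \<longlonglongrightarrow> (g_fun d c - (real d + 1)) / (real d + 1)"
proof -
  have "(\<lambda>n. real (n - d) * (c / real n) / (real d + 1) * (1 - (1 - c / real n)^(n - d - 1))^(d + 1)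
      - (1 - (1 - c / real n)^(n - d) - real (n - d) * (c / real n) * (1 - c / real n)^(n - d - 1)))
    \<longlonglongrightarrow> c / (real d + 1) * (1 - exp (-c))^(d + 1) - (1 - exp (-c) - c * exp (-c))"
    by (intro tendsto_intros tendsto_diff_times_div tendsto_one_minus_div_power
        tendsto_one_minus_div_power[of c "d + 1", folded diff_diff_left]) simp
  moreover have "c / (real d + 1) * (1 - exp (-c))^(d + 1) - (1 - exp (-c) - c * exp (-c))
      = (g_fun d c - (real d + 1)) / (real d + 1)"
    unfolding g_fun_def by (simp add: field_simps)
  ultimately show ?thesis
    unfolding no_free_facet_prob_def shared_prob_def by (simp add: field_simps)
qed

lemma binomial_Suc_mult_eq: "(n choose (d + 1)) * (d + 1) = (n choose d) * (n - d)"
proof (cases n)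
  case (Suc m)
  have "(n choose (d + 1)) * (d + 1) = n * (m choose d)"
    using Suc_times_binomial_eq[of m d] Suc by simp
  also have "\<dots> = (n choose d) * (n - d)"
    using binomial_absorb_comp[of n d] Suc by (simp add: mult.commute)
  finally show ?thesis .
qed simp

lemma binomial_Suc_le_mult: "n choose (d + 1) \<le> n * (n choose d)"
proof -
  have "n choose (d + 1) \<le> (n choose (d + 1)) * (d + 1)"
    by simp
  also have "\<dots> \<le> n * (n choose d)"
    unfolding binomial_Suc_mult_eq by (simp add: mult.commute)
  finally show ?thesis .
qed

lemma binomial_ge_square_div:
  assumes "2 \<le> d" and "d \<le> n"
  shows "(real n)\<^sup>2 / (real d)\<^sup>2 \<le> real (n choose d)"
proof -
  have "(real n / real d)\<^sup>2 \<le> (real n / real d) ^ d"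
    by (rule power_increasing) (use assms in auto)
  also have "\<dots> \<le> real (n choose d)"
    by (rule binomial_ge_n_over_k_pow_k[OF \<open>d \<le> n\<close>])
  finally show ?thesis
    by (simp add: power_divide)
qed

lemma prob_Yd_v_fun_nonpos_le_over_n:
  fixes c \<delta> :: real
  assumes d: "d \<ge> 2" and c: "c > 0" and \<delta>: "\<delta> > 0" and n: "n \<ge> d + 1" "real n \<ge> c"
    and gap: "real (n - d) / (real d + 1) * no_free_facet_prob n d (c / real n) - shared_prob n d (c / real n) > 2 * \<delta>"
  shows "prob_Yd n d (c / real n) (\<lambda>Y. v_fun n d Y \<le> 0)
     \<le> (c + 2^(d+1) * c\<^sup>2 + real d + 1) * (real d)\<^sup>2 / (\<delta>\<^sup>2 * real n)"
proof -
  define p where "p = c / real n"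
  define R where "R = real (n choose d)"
  define K where "K = c + 2^(d+1) * c\<^sup>2 + real d + 1"
  have n0: "real n > 0"
    using n by simp
  have p: "0 \<le> p" "p \<le> 1"
    unfolding p_def using c n n0 by auto
  have R: "R > 0" "R \<ge> (real n)\<^sup>2 / (real d)\<^sup>2"
    unfolding R_def using n binomial_ge_square_div[OF d] by auto
  have D: "real (card (dsimplices n d)) = R * real (n - d) / (real d + 1)"
    using arg_cong[where f = real, OF binomial_Suc_mult_eq[of n d]]
    unfolding card_dsimplices R_def by (simp add: field_simps)
  have "real (card (dsimplices n d)) * no_free_facet_prob n d p - real (card (ridges n d)) * shared_prob n d p
      = R * (real (n - d) / (real d + 1) * no_free_facet_prob n d p - shared_prob n d p)"
    unfolding D card_ridges R_def by (simp add: field_simps)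
  also have "\<dots> \<ge> 2 * (\<delta> * R)"
    using gap R(1) unfolding p_def by (simp add: mult_left_mono)
  finally have gap': "real (card (dsimplices n d)) * no_free_facet_prob n d p
      - real (card (ridges n d)) * shared_prob n d p \<ge> 2 * (\<delta> * R)" .
  have "prob_Yd n d p (\<lambda>Y. v_fun n d Y \<le> 0)
     \<le> (real (card (dsimplices n d)) * (p + 2^(d+1) * (real n)\<^sup>2 * p\<^sup>2) + R * (real n * (real d + 1))) / (\<delta> * R)\<^sup>2"
    using prob_Yd_v_fun_nonpos_le[OF p _ _ gap'] d \<delta> R unfolding card_ridges R_def by simp
  also have "\<dots> \<le> R * real n * K / (\<delta> * R)\<^sup>2"
  proof (intro divide_right_mono)
    have "real (card (dsimplices n d)) \<le> R * real n"
      using binomial_Suc_le_mult[of n d] unfolding card_dsimplices R_def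
      by (metis mult.commute of_nat_le_iff of_nat_mult)
    moreover have "p + 2^(d+1) * (real n)\<^sup>2 * p\<^sup>2 \<le> c + 2^(d+1) * c\<^sup>2"
      unfolding p_def using c n n0 by (simp add: field_simps power2_eq_square)
    ultimately have "real (card (dsimplices n d)) * (p + 2^(d+1) * (real n)\<^sup>2 * p\<^sup>2) \<le> R * real n * (c + 2^(d+1) * c\<^sup>2)"
      using p by (intro mult_mono) auto
    then show "real (card (dsimplices n d)) * (p + 2^(d+1) * (real n)\<^sup>2 * p\<^sup>2) + R * (real n * (real d + 1))
        \<le> R * real n * K"
      unfolding K_def by (simp add: algebra_simps)
  qed simp
  also have "\<dots> = real n * K / (\<delta>\<^sup>2 * R)"
    using R by (simp add: field_simps power2_eq_square)
  also have "\<dots> \<le> real n * K / (\<delta>\<^sup>2 * ((real n)\<^sup>2 / (real d)\<^sup>2))"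
    using R \<delta> n0 d c unfolding K_def by (intro divide_left_mono mult_left_mono mult_pos_pos) auto
  also have "\<dots> = K * (real d)\<^sup>2 / (\<delta>\<^sup>2 * real n)"
    using n0 d \<delta> by (simp add: field_simps power2_eq_square)
  finally show ?thesis
    unfolding p_def K_def .
qed

lemma prob_Yd_nonneg: "0 \<le> p \<Longrightarrow> p \<le> 1 \<Longrightarrow> 0 \<le> prob_Yd n d p P"
  unfolding prob_Yd_def by (intro sum_nonneg mult_nonneg_nonneg) auto

theorem theorem5:
  fixes d :: nat and c :: real
  assumes "d \<ge> 2" and "c > c_crit d"
  shows "(\<lambda>n. prob_Yd n d (c / real n) (\<lambda>Y. v_fun n d Y \<le> 0)) \<longlonglongrightarrow> 0"
proof -
  define \<gamma> where "\<gamma> = (g_fun d c - (real d + 1)) / (real d + 1)"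
  define \<delta> where "\<delta> = \<gamma> / 3"
  define K where "K = c + 2^(d+1) * c\<^sup>2 + real d + 1"
  have c: "c > 0"
    using c_crit_root(1)[OF assms(1)] assms(2) by linarith
  have \<gamma>: "\<gamma> > 0"
    unfolding \<gamma>_def using g_fun_gt_above_c_crit[OF assms] by simp
  then have \<delta>: "\<delta> > 0"
    unfolding \<delta>_def by simp
  have "2 * \<delta> < \<gamma>"
    unfolding \<delta>_def using \<gamma> by simp
  then have "\<forall>\<^sub>F n in sequentially. real (n - d) / (real d + 1) * no_free_facet_prob n d (c / real n)
      - shared_prob n d (c / real n) > 2 * \<delta>"
    unfolding \<gamma>_def by (rule order_tendstoD(1)[OF tendsto_expectation_gap])
  moreover have large: "\<forall>\<^sub>F n in sequentially. n \<ge> d + 1 \<and> real n \<ge> c"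
    by (intro eventually_conj) real_asymp+
  ultimately have upper: "\<forall>\<^sub>F n in sequentially.
      prob_Yd n d (c / real n) (\<lambda>Y. v_fun n d Y \<le> 0) \<le> K * (real d)\<^sup>2 / (\<delta>\<^sup>2 * real n)"
    unfolding K_def by eventually_elim (rule prob_Yd_v_fun_nonpos_le_over_n[OF assms(1) c \<delta>], auto)
  have lower: "\<forall>\<^sub>F n in sequentially. 0 \<le> prob_Yd n d (c / real n) (\<lambda>Y. v_fun n d Y \<le> 0)"
    using large by eventually_elim (use c in \<open>simp add: prob_Yd_nonneg\<close>)
  have "(\<lambda>n. K * (real d)\<^sup>2 / (\<delta>\<^sup>2 * real n)) \<longlonglongrightarrow> 0"
    using lim_const_over_n[of "K * (real d)\<^sup>2 / \<delta>\<^sup>2"] by (simp add: divide_divide_eq_left)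
  then show ?thesis
    by (rule tendsto_sandwich[OF lower upper tendsto_const])
qed

end
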